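(* Let $(Q,\bullet)$ be a left-non-degenerate weak co-RC-system on a quiver $Q$ over $\Lambda$. Then its completion $(\hat Q,\hat\bullet)$ is a weak co-RC-system.
   Context: A weak co-RC-system $(Q,\bullet)$ is a quiver with a partial binary operation such that: $x\bullet y$ is defined only if $\mathfrak{t}(x)=\mathfrak{t}(y)$; whenever $x\bullet y$ is defined, $y\bullet x$ is defined, $\mathfrak{t}(x\bullet y)=\mathfrak{s}(x)$, $\mathfrak{t}(y\bullet x)=\mathfrak{s}(y)$, $\mathfrak{s}(x\bullet y)=\mathfrak{s}(y\bullet x)$; and whenever $x\bullet y$, $x\bullet z$, $(x\bullet y)\bullet(x\bullet z)$ are defined, $y\bullet z$ and $(y\bullet x)\bullet(y\bullet z)$ are defined and $(x\bullet y)\bullet(x\bullet z)=(y\bullet x)\bullet(y\bullet z)$. Left-non-degenerate: each $x\bullet\cdot\colon Q(\Lambda,\mathfrak{t}(x))\to Q(\Lambda,\mathfrak{s}(x))$ is a bijection ($Q(\Lambda,\mu)$ = arrows with target $\mu$). The completion: $\hat Q=Q\cup\{\epsilon_\lambda\mid\lambda\in\Lambda\}$ with new loops $\epsilon_\lambda\colon\lambda\to\lambda$ not in $Q$, and $x\hat\bullet y:=x\bullet y$ for distinct $x,y\in Q$ when defined, $x\hat\bullet x:=\epsilon_{\mathfrak{s}(x)}$, $x\hat\bullet\epsilon_{\mathfrak{t}(x)}:=\epsilon_{\mathfrak{s}(x)}$, $\epsilon_{\mathfrak{t}(x)}\hat\bullet x:=x$. *)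

theory Defs
  imports Main
begin

definition quiver :: "'v set \<Rightarrow> 'a set \<Rightarrow> ('a \<Rightarrow> 'v) \<Rightarrow> ('a \<Rightarrow> 'v) \<Rightarrow> bool" where
  "quiver L Q s t \<longleftrightarrow> (\<forall>x\<in>Q. s x \<in> L \<and> t x \<in> L)"

definition weak_coRC ::
  "'v set \<Rightarrow> 'a set \<Rightarrow> ('a \<Rightarrow> 'v) \<Rightarrow> ('a \<Rightarrow> 'v) \<Rightarrow> ('a \<Rightarrow> 'a \<Rightarrow> 'a option) \<Rightarrow> bool" where
  "weak_coRC L Q s t op \<longleftrightarrow>
     quiver L Q s t \<and>
     \<comment> \<open>partial binary operation on Q\<close>
     (\<forall>x y w. op x y = Some w \<longrightarrow> x \<in> Q \<and> y \<in> Q \<and> w \<in> Q) \<and>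
     \<comment> \<open>x \<bullet> y defined only if t x = t y\<close>
     (\<forall>x y. op x y \<noteq> None \<longrightarrow> t x = t y) \<and>
     \<comment> \<open>second axiom\<close>
     (\<forall>x y a. op x y = Some a \<longrightarrow>
        (\<exists>b. op y x = Some b \<and> t a = s x \<and> t b = s y \<and> s a = s b)) \<and>
     \<comment> \<open>third axiom\<close>
     (\<forall>x y z a b c. op x y = Some a \<longrightarrow> op x z = Some b \<longrightarrow> op a b = Some c \<longrightarrow>
        (\<exists>d e. op y z = Some d \<and> op y x = Some e \<and> op e d = Some c))"

definition left_nondegenerate ::
  "'a set \<Rightarrow> ('a \<Rightarrow> 'v) \<Rightarrow> ('a \<Rightarrow> 'v) \<Rightarrow> ('a \<Rightarrow> 'a \<Rightarrow> 'a option) \<Rightarrow> bool" where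
  "left_nondegenerate Q s t op \<longleftrightarrow>
     (\<forall>x\<in>Q. (\<forall>y\<in>Q. t y = t x \<longrightarrow> op x y \<noteq> None) \<and>
        bij_betw (\<lambda>y. the (op x y)) {y\<in>Q. t y = t x} {z\<in>Q. t z = s x})"

text \<open>Completion: arrows Inl x for x \<in> Q, and new loops \<epsilon>_\<lambda> = Inr \<lambda> for \<lambda> \<in> L.\<close>

definition compl_arrows :: "'v set \<Rightarrow> 'a set \<Rightarrow> ('a + 'v) set" where
  "compl_arrows L Q = Inl ` Q \<union> Inr ` L"

fun compl_src :: "('a \<Rightarrow> 'v) \<Rightarrow> ('a + 'v) \<Rightarrow> 'v" where
  "compl_src s (Inl x) = s x"
| "compl_src s (Inr l) = l"

fun compl_op ::
  "'v set \<Rightarrow> 'a set \<Rightarrow> ('a \<Rightarrow> 'v) \<Rightarrow> ('a \<Rightarrow> 'v) \<Rightarrow> ('a \<Rightarrow> 'a \<Rightarrow> 'a option)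
     \<Rightarrow> ('a + 'v) \<Rightarrow> ('a + 'v) \<Rightarrow> ('a + 'v) option" where
  "compl_op L Q s t op (Inl x) (Inl y) =
     (if x \<in> Q \<and> y \<in> Q then
        (if x = y then Some (Inr (s x)) else map_option Inl (op x y))
      else None)"
| "compl_op L Q s t op (Inl x) (Inr l) =
     (if x \<in> Q \<and> l = t x then Some (Inr (s x)) else None)"
| "compl_op L Q s t op (Inr l) (Inl x) =
     (if x \<in> Q \<and> l = t x then Some (Inl x) else None)"
| "compl_op L Q s t op (Inr l) (Inr m) =
     (if l \<in> L \<and> l = m then Some (Inr l) else None)"

end

theory Submission
  imports Defs
begin

text \<open>The new loops act as partial units: \<open>\<epsilon> \<bullet> x = x\<close> and \<open>x \<bullet> \<epsilon> = x \<bullet> x = \<epsilon>\<close>.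
  Hence every instance of the third axiom of the completion in which a loop occurs, or two
  of \<open>x, y, z\<close> coincide, follows from the second axiom alone. For pairwise distinct
  \<open>x, y, z \<in> Q\<close>, left-non-degeneracy gives \<open>x \<bullet> y \<noteq> x \<bullet> z\<close> and \<open>y \<bullet> x \<noteq> y \<bullet> z\<close>, so both
  sides of \<open>(x \<bullet> y) \<bullet> (x \<bullet> z) = (y \<bullet> x) \<bullet> (y \<bullet> z)\<close> are computed by the original
  operation and the third axiom of \<open>Q\<close> applies.\<close>

locale weak_coRC_system =
  fixes L :: "'v set" and Q :: "'a set" and s t :: "'a \<Rightarrow> 'v"
    and op :: "'a \<Rightarrow> 'a \<Rightarrow> 'a option"
  assumes weak_coRC: "weak_coRC L Q s t op"
begin

lemma quiver: "quiver L Q s t"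
  using weak_coRC unfolding weak_coRC_def by blast

lemma src_tgt_in_vertices: "x \<in> Q \<Longrightarrow> s x \<in> L \<and> t x \<in> L"
  using quiver unfolding quiver_def by blast

lemma op_closed: "op x y = Some w \<Longrightarrow> x \<in> Q \<and> y \<in> Q \<and> w \<in> Q"
  using weak_coRC unfolding weak_coRC_def by blast

lemma op_defined_same_tgt: "op x y = Some w \<Longrightarrow> t x = t y"
  using weak_coRC unfolding weak_coRC_def by blast

lemma op_swap:
  "op x y = Some a \<Longrightarrow> \<exists>b. op y x = Some b \<and> t a = s x \<and> t b = s y \<and> s a = s b"
  using weak_coRC unfolding weak_coRC_def by blast

lemma op_rc_law:
  "op x y = Some a \<Longrightarrow> op x z = Some b \<Longrightarrow> op a b = Some c \<Longrightarrow>
    \<exists>d e. op y z = Some d \<and> op y x = Some e \<and> op e d = Some c"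
  using weak_coRC unfolding weak_coRC_def by blast

abbreviation compl_bullet :: "('a + 'v) \<Rightarrow> ('a + 'v) \<Rightarrow> ('a + 'v) option" where
  "compl_bullet \<equiv> compl_op L Q s t op"

lemma compl_quiver: "quiver L (compl_arrows L Q) (compl_src s) (compl_src t)"
  using src_tgt_in_vertices unfolding quiver_def compl_arrows_def by auto

lemma compl_op_closed:
  assumes "compl_bullet x y = Some w"
  shows "x \<in> compl_arrows L Q \<and> y \<in> compl_arrows L Q \<and> w \<in> compl_arrows L Q"
  using assms unfolding compl_arrows_def
  by (cases x; cases y) (auto simp: src_tgt_in_vertices split: if_splits dest: op_closed)

lemma compl_op_defined_same_tgt:
  "compl_bullet x y \<noteq> None \<Longrightarrow> compl_src t x = compl_src t y"
  by (cases x; cases y) (auto split: if_splits dest: op_defined_same_tgt)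

lemma compl_op_swap:
  assumes "compl_bullet x y = Some a"
  shows "\<exists>b. compl_bullet y x = Some b \<and> compl_src t a = compl_src s x \<and>
    compl_src t b = compl_src s y \<and> compl_src s a = compl_src s b"
  using assms by (cases x; cases y) (auto split: if_splits dest: op_swap op_closed)

lemma compl_op_diag: "x \<in> compl_arrows L Q \<Longrightarrow> compl_bullet x x = Some (Inr (compl_src s x))"
  unfolding compl_arrows_def by auto

lemma compl_op_loop_left: "compl_bullet (Inr l) y = Some a \<Longrightarrow> a = y"
  by (cases y) (auto split: if_splits)

lemma compl_op_loop_left_defined:
  "y \<in> compl_arrows L Q \<Longrightarrow> compl_bullet (Inr (compl_src t y)) y = Some y"
  unfolding compl_arrows_def by auto

lemma compl_op_loop_right: "compl_bullet y (Inr l) = Some a \<Longrightarrow> a = Inr (compl_src s y)"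
  by (cases y) (auto split: if_splits)

lemma compl_op_loop_right_defined:
  "y \<in> compl_arrows L Q \<Longrightarrow> compl_bullet y (Inr (compl_src t y)) = Some (Inr (compl_src s y))"
  unfolding compl_arrows_def by auto

lemma compl_op_rc_law_repeated:
  assumes xy: "compl_bullet x y = Some a" and xz: "compl_bullet x z = Some b"
    and ab: "compl_bullet a b = Some c"
    and "x = y \<or> x = z \<or> y = z"
  shows "\<exists>d e. compl_bullet y z = Some d \<and> compl_bullet y x = Some e \<and> compl_bullet e d = Some c"
proof -
  obtain e where ye: "compl_bullet y x = Some e"
    and tgt_e: "compl_src t e = compl_src s y" and src_e: "compl_src s a = compl_src s e"
    using compl_op_swap[OF xy] by blast
  have arrows: "x \<in> compl_arrows L Q" "y \<in> compl_arrows L Q" "a \<in> compl_arrows L Q"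
    "e \<in> compl_arrows L Q"
    using compl_op_closed[OF xy] compl_op_closed[OF ye] by blast+
  consider "x = y" | "x = z" | "y = z"
    using assms(4) by blast
  then show ?thesis
  proof cases
    case 1
    then show ?thesis using xy xz ab by blast
  next
    case 2
    then have "b = Inr (compl_src s x)"
      using xz compl_op_diag[OF arrows(1)] by simp
    then have "c = Inr (compl_src s e)"
      using ab compl_op_loop_right src_e by metis
    then show ?thesis
      using 2 ye compl_op_diag[OF arrows(4)] by blast
  next
    case 3
    then have "c = Inr (compl_src s e)"
      using xy xz ab compl_op_diag[OF arrows(3)] src_e by simp
    then show ?thesis
      using 3 ye compl_op_diag[OF arrows(2)] compl_op_loop_right_defined[OF arrows(4)] tgt_e
      by auto
  qed
qed

lemma compl_op_rc_law_loop:
  assumes xy: "compl_bullet x y = Some a" and xz: "compl_bullet x z = Some b"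
    and ab: "compl_bullet a b = Some c"
    and "x \<in> range Inr \<or> y \<in> range Inr \<or> z \<in> range Inr"
  shows "\<exists>d e. compl_bullet y z = Some d \<and> compl_bullet y x = Some e \<and> compl_bullet e d = Some c"
proof -
  obtain e where ye: "compl_bullet y x = Some e"
    and tgt_e: "compl_src t e = compl_src s y" and src_e: "compl_src s a = compl_src s e"
    using compl_op_swap[OF xy] by blast
  have arrows: "x \<in> compl_arrows L Q" "z \<in> compl_arrows L Q" "e \<in> compl_arrows L Q"
    using compl_op_closed[OF xz] compl_op_closed[OF ye] by blast+
  have tgt_y: "compl_src t y = compl_src t x" and tgt_z: "compl_src t z = compl_src t x"
    using compl_op_defined_same_tgt xy xz by (metis option.distinct(1))+
  consider l where "x = Inr l" | m where "y = Inr m" | n where "z = Inr n"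
    using assms(4) by blast
  then show ?thesis
  proof cases
    case 1
    then have yz: "compl_bullet y z = Some c"
      using xy xz ab compl_op_loop_left by blast
    have "c \<in> compl_arrows L Q" "compl_src t c = compl_src s y"
      using compl_op_closed[OF yz] compl_op_swap[OF yz] by blast+
    moreover have "e = Inr (compl_src s y)"
      using 1 ye compl_op_loop_right by blast
    ultimately show ?thesis
      using yz ye compl_op_loop_left_defined by metis
  next
    case 2
    then have "c = b"
      using xy ab compl_op_loop_right compl_op_loop_left by blast
    then show ?thesis
      using 2 xz tgt_y tgt_z compl_op_loop_left_defined[OF arrows(1)]
        compl_op_loop_left_defined[OF arrows(2)]
      by auto
  next
    case 3
    then have "c = Inr (compl_src s e)"
      using xz ab src_e compl_op_loop_right by blast
    then show ?thesis
      using 3 ye tgt_y tgt_z tgt_e compl_op_loop_right_defined[OF arrows(3)]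
        compl_op_loop_right_defined[of y] compl_op_closed[OF ye]
      by auto
  qed
qed

end

locale left_nondegenerate_weak_coRC_system = weak_coRC_system +
  assumes left_nondegenerate: "left_nondegenerate Q s t op"
begin

lemma op_left_cancel:
  assumes "x \<in> Q" "y \<in> Q" "z \<in> Q" "op x y = Some w" "op x z = Some w"
  shows "y = z"
proof -
  have "inj_on (\<lambda>y. the (op x y)) {y\<in>Q. t y = t x}"
    using left_nondegenerate \<open>x \<in> Q\<close> unfolding left_nondegenerate_def bij_betw_def by blast
  moreover have "t y = t x" "t z = t x"
    using assms op_defined_same_tgt by metis+
  ultimately show ?thesis
    using assms unfolding inj_on_def by auto
qed

lemma compl_op_rc_law_distinct:
  assumes xy: "compl_bullet (Inl x) (Inl y) = Some a" and xz: "compl_bullet (Inl x) (Inl z) = Some b"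
    and ab: "compl_bullet a b = Some c"
    and Q: "x \<in> Q" "y \<in> Q" "z \<in> Q"
    and distinct: "x \<noteq> y" "x \<noteq> z" "y \<noteq> z"
  shows "\<exists>d e. compl_bullet (Inl y) (Inl z) = Some d \<and> compl_bullet (Inl y) (Inl x) = Some e
    \<and> compl_bullet e d = Some c"
proof -
  obtain p q where p: "op x y = Some p" "a = Inl p" and q: "op x z = Some q" "b = Inl q"
    using xy xz Q distinct by auto
  have "p \<noteq> q"
    using op_left_cancel[OF Q] p q distinct by blast
  then obtain r where r: "op p q = Some r" "c = Inl r"
    using ab p q by (auto split: if_splits)
  obtain d e where d: "op y z = Some d" and e: "op y x = Some e" and "op e d = Some r"
    using op_rc_law[OF p(1) q(1) r(1)] by blast
  moreover have "e \<noteq> d"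
    using op_left_cancel[OF Q(2,1,3)] d e distinct by blast
  ultimately show ?thesis
    using r Q distinct op_closed[OF d] op_closed[OF e] by auto
qed

lemma compl_op_rc_law:
  assumes xy: "compl_bullet x y = Some a" and xz: "compl_bullet x z = Some b"
    and ab: "compl_bullet a b = Some c"
  shows "\<exists>d e. compl_bullet y z = Some d \<and> compl_bullet y x = Some e \<and> compl_bullet e d = Some c"
proof (cases "x = y \<or> x = z \<or> y = z \<or> x \<in> range Inr \<or> y \<in> range Inr \<or> z \<in> range Inr")
  case True
  then show ?thesis
    using compl_op_rc_law_repeated[OF assms] compl_op_rc_law_loop[OF assms] by blast
next
  case False
  then obtain x' y' z' where "x = Inl x'" "y = Inl y'" "z = Inl z'"
    by (metis rangeI sum.exhaust)
  moreover have "x' \<in> Q" "y' \<in> Q" "z' \<in> Q"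
    using compl_op_closed[OF xy] compl_op_closed[OF xz] calculation
    unfolding compl_arrows_def by auto
  ultimately show ?thesis
    using compl_op_rc_law_distinct assms False by blast
qed

end

theorem lemma3p9:
  fixes L :: "'v set" and Q :: "'a set" and s t :: "'a \<Rightarrow> 'v"
    and op :: "'a \<Rightarrow> 'a \<Rightarrow> 'a option"
  assumes "weak_coRC L Q s t op"
    and "left_nondegenerate Q s t op"
  shows "weak_coRC L (compl_arrows L Q) (compl_src s) (compl_src t) (compl_op L Q s t op)"
proof -
  interpret left_nondegenerate_weak_coRC_system L Q s t op
    using assms by unfold_locales
  show ?thesis
    unfolding weak_coRC_def
    using compl_quiver compl_op_closed compl_op_defined_same_tgt compl_op_swap compl_op_rc_law
    by blast
qed

end
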